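(* Suppose the relationship network on $V$ is fixed and known to the designer. For a distinguished agent $k\in V$ define the mechanism $g^{2,k}$ by, for $i\in V\setminus\{k\}$, $$g^{2,k}_i(\mathbf m)=\begin{cases}\dfrac{1}{|\mathrm{posE}(\mathbf m_{E_i\cap E_k})\setminus\{k\}|}, & \text{if } i\in \mathrm{posE}(\mathbf m_{E_k}),\\[2mm] 0,&\text{otherwise,}\end{cases}\qquad g^{2,k}_k(\mathbf m)=1-\sum_{i\in V\setminus\{k\}}g^{2,k}_i(\mathbf m).$$ Then for every $k\in V$, $g^{2,k}$ is valid and DSIC. Moreover, if the Intersection Condition E(k) holds, i.e. $E_i\cap E_j\cap E_k\neq\varnothing$ for all $i,j\in V\setminus\{k\}$ (including $i=j$), then $g^{2,k}$ is efficient.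
   Context: Let $V=\{1,\dots,n\}$ be a finite set of agents. A relationship network on $V$ assigns to every unordered pair of distinct agents exactly one of three symmetric relations: friends, enemies, or impartial. For $i\in V$, $F_i,E_i,I_i$ denote the sets of friends, enemies and impartials of $i$; they partition $V\setminus\{i\}$, and $j\in F_i\iff i\in F_j$ (similarly for $E$ and $I$). A set $N\subseteq V$ is the set of needy agents. Preferences: fix weights $w_f,w_e>0$. For $p,p'\in[0,1]^V$, $p\succ_i p'$ iff either $p_i>p'_i$, or $p_i=p'_i$ and $w_f\sum_{j\in F_i}(p_j-p'_j)-w_e\sum_{j\in E_i}(p_j-p'_j)>0$; $p\succsim_i p'$ means not $p'\succ_i p$. Known-network setting: each agent $i$ sends a message $m_i\subseteq V$ (the set of agents $i$ reports as needy; $j\in m_i$ is a positive vote of $i$ on $j$). A message profile is $\mathbf m=(m_i)_{i\in V}$; for $X\subseteq V$, $\mathbf m_X=(m_j)_{j\in X}$. A mechanism is a function $g:(2^V)^V\to[0,1]^V$; it is valid if $\sum_{i\in V}g_i(\mathbf m)\le 1$ for all $\mathbf m$; it is DSIC if for all $i\in V$, all profiles $\mathbf m$ and all $m'_i\subseteq V$, $g(\mathbf m)\succsim_i g(m'_i,\mathbf m_{-i})$; it is efficient if for every nonempty $N\subseteq V$, at the truthful profile $\mathbf m$ with $m_j=N$ for all $j$, $\sum_{i\in N}g_i(\mathbf m)=1$. For $X\subseteq V$, $\mathrm{posE}(\mathbf m_X)$ is the set of agents $j\in V$ such that $j\in m_l$ for every $l\in X\cap E_j$ (i.e. $j$ receives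 positive votes from all its enemies in $X$). *)

theory Defs
  imports Complex_Main
begin

text \<open>Agents are the elements of a finite type 'a (V = UNIV).
  A relationship network assigns to each pair one of three relations.\<close>

datatype relation = Friends | Enemies | Impartial

definition network :: "('a \<Rightarrow> 'a \<Rightarrow> relation) \<Rightarrow> bool" where
  "network r \<longleftrightarrow> (\<forall>i j. r i j = r j i)"

definition Fr :: "('a \<Rightarrow> 'a \<Rightarrow> relation) \<Rightarrow> 'a \<Rightarrow> 'a set" where
  "Fr r i = {j. j \<noteq> i \<and> r i j = Friends}"

definition En :: "('a \<Rightarrow> 'a \<Rightarrow> relation) \<Rightarrow> 'a \<Rightarrow> 'a set" where
  "En r i = {j. j \<noteq> i \<and> r i j = Enemies}"

definition Im :: "('a \<Rightarrow> 'a \<Rightarrow> relation) \<Rightarrow> 'a \<Rightarrow> 'a set" where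
  "Im r i = {j. j \<noteq> i \<and> r i j = Impartial}"

definition pref_strict ::
  "('a::finite \<Rightarrow> 'a \<Rightarrow> relation) \<Rightarrow> real \<Rightarrow> real \<Rightarrow> 'a \<Rightarrow> ('a \<Rightarrow> real) \<Rightarrow> ('a \<Rightarrow> real) \<Rightarrow> bool" where
  "pref_strict r wF wE i p p' \<longleftrightarrow>
     p i > p' i \<or>
     (p i = p' i \<and>
      wF * (\<Sum>j\<in>Fr r i. p j - p' j) - wE * (\<Sum>j\<in>En r i. p j - p' j) > 0)"

definition pref_weak ::
  "('a::finite \<Rightarrow> 'a \<Rightarrow> relation) \<Rightarrow> real \<Rightarrow> real \<Rightarrow> 'a \<Rightarrow> ('a \<Rightarrow> real) \<Rightarrow> ('a \<Rightarrow> real) \<Rightarrow> bool" where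
  "pref_weak r wF wE i p p' \<longleftrightarrow> \<not> pref_strict r wF wE i p' p"

definition valid :: "(('a::finite \<Rightarrow> 'a set) \<Rightarrow> 'a \<Rightarrow> real) \<Rightarrow> bool" where
  "valid g \<longleftrightarrow> (\<forall>m. (\<forall>i. 0 \<le> g m i \<and> g m i \<le> 1) \<and> (\<Sum>i\<in>UNIV. g m i) \<le> 1)"

definition DSIC ::
  "('a::finite \<Rightarrow> 'a \<Rightarrow> relation) \<Rightarrow> real \<Rightarrow> real \<Rightarrow> (('a \<Rightarrow> 'a set) \<Rightarrow> 'a \<Rightarrow> real) \<Rightarrow> bool" where
  "DSIC r wF wE g \<longleftrightarrow> (\<forall>i m m'. pref_weak r wF wE i (g m) (g (m(i := m'))))"

definition efficient :: "(('a::finite \<Rightarrow> 'a set) \<Rightarrow> 'a \<Rightarrow> real) \<Rightarrow> bool" where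
  "efficient g \<longleftrightarrow> (\<forall>N. N \<noteq> {} \<longrightarrow> (\<Sum>i\<in>N. g (\<lambda>_. N) i) = 1)"

definition posE :: "('a \<Rightarrow> 'a \<Rightarrow> relation) \<Rightarrow> ('a \<Rightarrow> 'a set) \<Rightarrow> 'a set \<Rightarrow> 'a set" where
  "posE r m X = {j. \<forall>l \<in> X \<inter> En r j. j \<in> m l}"

definition g2_aux :: "('a \<Rightarrow> 'a \<Rightarrow> relation) \<Rightarrow> 'a \<Rightarrow> ('a \<Rightarrow> 'a set) \<Rightarrow> 'a \<Rightarrow> real" where
  "g2_aux r k m i =
     (if i \<in> posE r m (En r k)
      then 1 / real (card (posE r m (En r i \<inter> En r k) - {k}))
      else 0)"

definition g2 :: "('a::finite \<Rightarrow> 'a \<Rightarrow> relation) \<Rightarrow> 'a \<Rightarrow> ('a \<Rightarrow> 'a set) \<Rightarrow> 'a \<Rightarrow> real" where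
  "g2 r k m i =
     (if i = k then 1 - (\<Sum>j\<in>UNIV - {k}. g2_aux r k m j) else g2_aux r k m i)"

definition intersection_condition :: "('a \<Rightarrow> 'a \<Rightarrow> relation) \<Rightarrow> 'a \<Rightarrow> bool" where
  "intersection_condition r k \<longleftrightarrow>
     (\<forall>i j. i \<noteq> k \<longrightarrow> j \<noteq> k \<longrightarrow> En r i \<inter> En r j \<inter> En r k \<noteq> {})"

end

theory Submission
  imports Defs
begin

text \<open>
  The message of agent i enters g2_aux r k m j only through the condition
  i \<in> E_j \<inter> E_k, so a deviation of i changes only the shares of its enemies (the
  residual share of k moves only if i \<in> E_k, and then k is an enemy of i as well).
  Agent i's own share and those of its friends stay fixed, and since the shares always
  add up to one, the total share of its enemies is unchanged too; hence no deviation is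
  a strict improvement.  Validity holds because posE is antitone in the set of voters,
  so each agent of posE(m_{E_k}) - {k} receives at most the reciprocal of their number.
  Under the intersection condition every relevant set of voters is nonempty, so at the
  truthful profile N all these posE sets collapse to N and the needy agents other than k
  share the unit equally.
\<close>

lemma posE_antimono: "X \<subseteq> Y \<Longrightarrow> posE r m Y \<subseteq> posE r m X"
  unfolding posE_def by auto

lemma posE_cong: "(\<And>l. l \<in> X \<Longrightarrow> m l = m' l) \<Longrightarrow> posE r m X = posE r m' X"
  unfolding posE_def by auto

lemma posE_const_profile: "posE r (\<lambda>_. N) X = N \<union> {j. X \<inter> En r j = {}}"
  unfolding posE_def by auto

lemma En_sym: "network r \<Longrightarrow> i \<in> En r j \<longleftrightarrow> j \<in> En r i"
  unfolding network_def En_def by auto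

lemma g2_aux_nonneg: "0 \<le> g2_aux r k m j"
  by (simp add: g2_aux_def)

lemma g2_aux_cong:
  assumes "\<And>l. l \<in> En r j \<inter> En r k \<Longrightarrow> m l = m' l"
  shows "g2_aux r k m j = g2_aux r k m' j"
proof -
  have "j \<in> posE r m (En r k) \<longleftrightarrow> j \<in> posE r m' (En r k)"
    using assms by (auto simp: posE_def)
  moreover have "posE r m (En r j \<inter> En r k) = posE r m' (En r j \<inter> En r k)"
    using assms by (rule posE_cong)
  ultimately show ?thesis
    unfolding g2_aux_def by simp
qed

lemma g2_aux_le_share:
  fixes r :: "'a::finite \<Rightarrow> 'a \<Rightarrow> relation"
  assumes "j \<in> posE r m (En r k) - {k}"
  shows "g2_aux r k m j \<le> 1 / real (card (posE r m (En r k) - {k}))"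
proof -
  let ?S = "posE r m (En r k) - {k}" and ?T = "posE r m (En r j \<inter> En r k) - {k}"
  have "?S \<subseteq> ?T"
    using posE_antimono[of "En r j \<inter> En r k" "En r k" r m] by auto
  then have "card ?S \<le> card ?T"
    by (simp add: card_mono)
  moreover have "card ?S > 0"
    using assms by (auto simp: card_gt_0_iff)
  ultimately have "1 / real (card ?T) \<le> 1 / real (card ?S)"
    by (simp add: frac_le)
  then show ?thesis
    using assms by (simp add: g2_aux_def)
qed

lemma sum_g2_aux_le_1:
  fixes r :: "'a::finite \<Rightarrow> 'a \<Rightarrow> relation"
  shows "(\<Sum>j\<in>UNIV - {k}. g2_aux r k m j) \<le> 1"
proof -
  let ?S = "posE r m (En r k) - {k}"
  have "(\<Sum>j\<in>UNIV - {k}. g2_aux r k m j) = (\<Sum>j\<in>?S. g2_aux r k m j)"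
    by (rule sum.mono_neutral_right) (auto simp: g2_aux_def)
  also have "\<dots> \<le> real (card ?S) * (1 / real (card ?S))"
    using g2_aux_le_share by (intro sum_bounded_above) auto
  also have "\<dots> \<le> 1"
    by simp
  finally show ?thesis .
qed

lemma sum_g2_eq_1:
  fixes r :: "'a::finite \<Rightarrow> 'a \<Rightarrow> relation"
  shows "(\<Sum>i\<in>UNIV. g2 r k m i) = 1"
proof -
  have "(\<Sum>i\<in>UNIV. g2 r k m i) = g2 r k m k + (\<Sum>i\<in>UNIV - {k}. g2 r k m i)"
    by (simp add: sum.remove)
  also have "(\<Sum>i\<in>UNIV - {k}. g2 r k m i) = (\<Sum>i\<in>UNIV - {k}. g2_aux r k m i)"
    by (rule sum.cong) (auto simp: g2_def)
  finally show ?thesis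
    by (simp add: g2_def)
qed

lemma valid_g2:
  fixes r :: "'a::finite \<Rightarrow> 'a \<Rightarrow> relation"
  shows "valid (g2 r k)"
  unfolding valid_def
proof (intro allI conjI)
  fix m i
  have aux_sum_bounds:
    "0 \<le> (\<Sum>j\<in>UNIV - {k}. g2_aux r k m j)" "(\<Sum>j\<in>UNIV - {k}. g2_aux r k m j) \<le> 1"
    by (simp_all add: sum_nonneg g2_aux_nonneg sum_g2_aux_le_1)
  have "i \<noteq> k \<Longrightarrow> g2_aux r k m i \<le> (\<Sum>j\<in>UNIV - {k}. g2_aux r k m j)"
    by (rule member_le_sum) (simp_all add: g2_aux_nonneg)
  with aux_sum_bounds show "0 \<le> g2 r k m i" "g2 r k m i \<le> 1"
    by (auto simp: g2_def g2_aux_nonneg)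
  show "(\<Sum>i\<in>UNIV. g2 r k m i) \<le> 1"
    by (simp add: sum_g2_eq_1)
qed

lemma g2_update_non_enemy:
  assumes "network r" and "j \<notin> En r i"
  shows "g2 r k (m(i := M)) j = g2 r k m j"
proof (cases "i \<in> En r k")
  case False
  then have "g2_aux r k (m(i := M)) = g2_aux r k m"
    by (intro ext g2_aux_cong) auto
  then show ?thesis
    by (simp add: g2_def)
next
  case True
  then have "j \<noteq> k"
    using assms En_sym[OF assms(1)] by blast
  moreover have "i \<notin> En r j"
    using assms En_sym[OF assms(1)] by blast
  then have "g2_aux r k (m(i := M)) j = g2_aux r k m j"
    by (intro g2_aux_cong) auto
  ultimately show ?thesis
    by (simp add: g2_def)
qed

lemma sum_eq_if_total_eq:
  fixes f g :: "'a::finite \<Rightarrow> 'b::ab_group_add"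
  assumes "sum f UNIV = sum g UNIV" and "\<And>j. j \<notin> A \<Longrightarrow> f j = g j"
  shows "sum f A = sum g A"
proof -
  have "sum f (UNIV - A) = sum g (UNIV - A)"
    using assms(2) by (intro sum.cong) auto
  with assms(1) show ?thesis
    using sum.subset_diff[of A UNIV f] sum.subset_diff[of A UNIV g] by simp
qed

lemma not_pref_strict_if_indifferent:
  assumes "p i = p' i" and "\<And>j. j \<in> Fr r i \<Longrightarrow> p j = p' j"
    and "(\<Sum>j\<in>En r i. p j) = (\<Sum>j\<in>En r i. p' j)"
  shows "\<not> pref_strict r wF wE i p p'"
  using assms by (simp add: pref_strict_def sum_subtractf)

lemma DSIC_g2:
  fixes r :: "'a::finite \<Rightarrow> 'a \<Rightarrow> relation"
  assumes "network r"
  shows "DSIC r wF wE (g2 r k)"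
  unfolding DSIC_def pref_weak_def
proof (intro allI not_pref_strict_if_indifferent)
  fix i m M
  have unchanged: "g2 r k (m(i := M)) j = g2 r k m j" if "j \<notin> En r i" for j
    using assms that by (rule g2_update_non_enemy)
  show "g2 r k (m(i := M)) i = g2 r k m i"
    by (rule unchanged) (simp add: En_def)
  show "g2 r k (m(i := M)) j = g2 r k m j" if "j \<in> Fr r i" for j
    using that by (intro unchanged) (simp add: Fr_def En_def)
  show "(\<Sum>j\<in>En r i. g2 r k (m(i := M)) j) = (\<Sum>j\<in>En r i. g2 r k m j)"
    by (rule sum_eq_if_total_eq[OF _ unchanged]) (simp only: sum_g2_eq_1)
qed

lemma g2_aux_truthful:
  assumes "intersection_condition r k" and "i \<noteq> k"
  shows "g2_aux r k (\<lambda>_. N) i = (if i \<in> N then 1 / real (card (N - {k})) else 0)"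
proof -
  have "posE r (\<lambda>_. N) (En r i \<inter> En r k) - {k} = N - {k}"
    using assms unfolding intersection_condition_def posE_const_profile by blast
  moreover have "i \<in> posE r (\<lambda>_. N) (En r k) \<longleftrightarrow> i \<in> N"
    using assms unfolding intersection_condition_def posE_const_profile by blast
  ultimately show ?thesis
    by (simp add: g2_aux_def)
qed

lemma g2_truthful_outside:
  fixes r :: "'a::finite \<Rightarrow> 'a \<Rightarrow> relation"
  assumes "intersection_condition r k" and "N \<noteq> {}" and "i \<notin> N"
  shows "g2 r k (\<lambda>_. N) i = 0"
proof (cases "i = k")
  case True
  with assms have N: "N - {k} = N" "(UNIV - {k}) \<inter> N = N"
    by auto
  have "(\<Sum>j\<in>UNIV - {k}. g2_aux r k (\<lambda>_. N) j)
      = (\<Sum>j\<in>UNIV - {k}. if j \<in> N then 1 / real (card N) else 0)"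
    using assms(1) N(1) by (intro sum.cong) (simp_all add: g2_aux_truthful)
  also have "\<dots> = (\<Sum>j\<in>N. 1 / real (card N))"
    by (simp only: sum.inter_restrict[symmetric] finite N(2))
  also have "\<dots> = 1"
    using assms(2) by simp
  finally show ?thesis
    using True by (simp add: g2_def)
next
  case False
  with assms show ?thesis
    by (simp add: g2_def g2_aux_truthful)
qed

lemma efficient_g2:
  fixes r :: "'a::finite \<Rightarrow> 'a \<Rightarrow> relation"
  assumes "intersection_condition r k"
  shows "efficient (g2 r k)"
  unfolding efficient_def
proof (intro allI impI)
  fix N :: "'a set"
  assume "N \<noteq> {}"
  then have "(\<Sum>i\<in>N. g2 r k (\<lambda>_. N) i) = (\<Sum>i\<in>UNIV. g2 r k (\<lambda>_. N) i)"
    using assms by (intro sum.mono_neutral_left) (auto simp: g2_truthful_outside)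
  then show "(\<Sum>i\<in>N. g2 r k (\<lambda>_. N) i) = 1"
    by (simp add: sum_g2_eq_1)
qed

theorem theorem2:
  fixes r :: "'a::finite \<Rightarrow> 'a \<Rightarrow> relation" and k :: 'a and wF wE :: real
  assumes "network r" and "wF > 0" and "wE > 0"
  shows "valid (g2 r k) \<and> DSIC r wF wE (g2 r k) \<and>
         (intersection_condition r k \<longrightarrow> efficient (g2 r k))"
  using valid_g2 DSIC_g2[OF assms(1)] efficient_g2 by blast

end
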